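(* Let $s$ be an integer with $|s|\ge 10^5$ such that $3s^2-4s+4$ is a perfect square and $s^2+2$ is squarefree. Let $r_1,r_2,r_3,r_4$ be the roots of $F_s(t)= t^4 + (4s^3 - 4s^2 + 8s - 4)t^3 + (-6s^2 - 6)t^2 + 4t + 1$, labeled so that the generator $\sigma$ of the cyclic Galois group of the splitting field satisfies $\sigma(r_j)=r_{j+1}$ (indices mod 4) and $r_1\approx -4s^3$ is the root of largest absolute value. Let $$R'=\left|\det\begin{pmatrix}\log|r_1|&\log|r_2|&\log|r_3|\\ \log|r_2|&\log|r_3|&\log|r_4|\\ \log|r_3|&\log|r_4|&\log|r_1|\end{pmatrix}\right|$$ and $\epsilon=s^2+1+|s|\sqrt{s^2+2}$. Then $$R'=\tfrac14\left(\log^2|r_1/r_3|+\log^2|r_2/r_4|\right)(2\log\epsilon)\quad\text{and}\quad \frac{R'}{\log\epsilon}<9\log^2|s|.$$ *)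

theory Defs
  imports "HOL-Analysis.Analysis" "HOL-Computational_Algebra.Polynomial"
    "HOL-Computational_Algebra.Squarefree"
begin

definition F_poly :: "int \<Rightarrow> complex poly" where
  "F_poly s = pCons 1 (pCons 4 (pCons (of_int (- 6 * s ^ 2 - 6)) (pCons (of_int (4 * s ^ 3 - 4 * s ^ 2 + 8 * s - 4)) (pCons 1 0))))"

definition subfield_C :: "complex set \<Rightarrow> bool" where
  "subfield_C K \<longleftrightarrow> 0 \<in> K \<and> 1 \<in> K \<and>
     (\<forall>x\<in>K. \<forall>y\<in>K. x + y \<in> K \<and> x * y \<in> K) \<and>
     (\<forall>x\<in>K. - x \<in> K) \<and> (\<forall>x\<in>K. inverse x \<in> K)"

text \<open>The subfield of C generated (over Q) by a set S; for S the roots of a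
  rational polynomial this is its splitting field inside C.\<close>
definition gen_field :: "complex set \<Rightarrow> complex set" where
  "gen_field S = \<Inter> {K. subfield_C K \<and> S \<subseteq> K}"

text \<open>Field automorphisms of K (they automatically fix Q, so these are exactly
  the elements of the Galois group of K over Q).\<close>
definition field_aut :: "complex set \<Rightarrow> (complex \<Rightarrow> complex) \<Rightarrow> bool" where
  "field_aut K \<sigma> \<longleftrightarrow> bij_betw \<sigma> K K \<and> \<sigma> 1 = 1 \<and>
     (\<forall>x\<in>K. \<forall>y\<in>K. \<sigma> (x + y) = \<sigma> x + \<sigma> y \<and> \<sigma> (x * y) = \<sigma> x * \<sigma> y)"

definition generates_aut :: "complex set \<Rightarrow> (complex \<Rightarrow> complex) \<Rightarrow> bool" where
  "generates_aut K \<sigma> \<longleftrightarrow> field_aut K \<sigma> \<and>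
     (\<forall>\<tau>. field_aut K \<tau> \<longrightarrow> (\<exists>k::nat. \<forall>x\<in>K. \<tau> x = (\<sigma> ^^ k) x))"

end

theory Submission
  imports Defs
begin

text \<open>Over \<open>\<rat>(w)\<close> with \<open>w\<^sup>2 = s\<^sup>2 + 2\<close> the quartic splits as \<open>F_factor s w * F_factor s (-w)\<close>,
  and \<open>w\<close> lies in the splitting field. The generator \<sigma> cannot fix \<open>w\<close>, since then
  \<open>r1, r2, r3\<close> would be three roots of one quadratic; so \<sigma> swaps the two factors, and
  \<open>r1, r3\<close> are the roots of one of them and \<open>r2, r4\<close> of the other. By Vieta,
  \<open>\<bar>r1 r3\<bar> = \<eta>\<close> and \<open>\<bar>r2 r4\<bar> = 1/\<eta>\<close> for the unit \<open>\<eta> = s\<^sup>2 + 1 + s w\<close>, which is \<epsilon> or \<open>1/\<epsilon>\<close>.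
  Hence \<open>a1 + a3 = -(a2 + a4) = \<plusminus>log \<epsilon>\<close>, and this makes the determinant factor.
  For the bound, \<open>r1/r3 + r3/r1\<close> is real, which forces \<open>r1/r3\<close> to be real or unimodular;
  either way \<open>\<bar>log\<bar>r1/r3\<bar>\<bar> \<le> log \<bar>r1/r3 + r3/r1\<bar>\<close> (or 0). The values \<open>r1/r3 + r3/r1 + 2\<close> and
  \<open>r2/r4 + r4/r2 + 2\<close> are the two roots of an explicit real quadratic: one has size about
  \<open>8 s\<^sup>4\<close>, the other lies in \<open>[-7, 0)\<close>.\<close>

definition F_factor :: "int \<Rightarrow> complex \<Rightarrow> complex \<Rightarrow> complex" where
  "F_factor s w t = t\<^sup>2 + (of_int (2 * (s^3 - s\<^sup>2 + 2 * s - 1)) + of_int (2 * (s\<^sup>2 - s + 1)) * w) * t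
      + (of_int (- s\<^sup>2 - 1) + of_int (- s) * w)"

lemma poly_F_poly_eq_F_factor_mult:
  assumes "w\<^sup>2 = of_int (s\<^sup>2 + 2)"
  shows "poly (F_poly s) t = F_factor s w t * F_factor s (- w) t"
  using assms unfolding F_poly_def F_factor_def by simp algebra

lemma monic_quadratic_roots:
  fixes b c x y :: "'a :: idom"
  assumes x: "x\<^sup>2 + b * x + c = 0" and y: "y\<^sup>2 + b * y + c = 0" and "x \<noteq> y"
  shows "x + y = - b" and "x * y = c"
proof -
  have "(x - y) * (x + y + b) = (x\<^sup>2 + b * x + c) - (y\<^sup>2 + b * y + c)"
    by (simp add: algebra_simps power2_eq_square)
  with x y \<open>x \<noteq> y\<close> have "x + y + b = 0" by simp
  then show sum: "x + y = - b" by (simp add: eq_neg_iff_add_eq_0)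
  then have b: "b = - (x + y)" by simp
  have "c - x * y = x\<^sup>2 + b * x + c"
    unfolding b by (simp add: algebra_simps power2_eq_square)
  with x show "x * y = c" by simp
qed

lemma monic_quadratic_three_roots:
  fixes b c x y z :: "'a :: idom"
  assumes "x\<^sup>2 + b * x + c = 0" "y\<^sup>2 + b * y + c = 0" "z\<^sup>2 + b * z + c = 0"
  shows "x = y \<or> x = z \<or> y = z"
proof (rule ccontr)
  assume "\<not> (x = y \<or> x = z \<or> y = z)"
  then have "x + y = x + z"
    using monic_quadratic_roots(1) [OF assms(1,2)] monic_quadratic_roots(1) [OF assms(1,3)] by simp
  with \<open>\<not> (x = y \<or> x = z \<or> y = z)\<close> show False by simp
qed

lemma monic_quadratic_reflect:
  fixes b c x :: "'a :: comm_ring_1"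
  shows "(- b - x)\<^sup>2 + b * (- b - x) + c = x\<^sup>2 + b * x + c"
  by (simp add: algebra_simps power2_eq_square)

lemma F_factor_roots_sum_prod:
  assumes "F_factor s w x = 0" "F_factor s w y = 0" "x \<noteq> y"
  shows "x + y = - (of_int (2 * (s^3 - s\<^sup>2 + 2 * s - 1)) + of_int (2 * (s\<^sup>2 - s + 1)) * w)"
    and "x * y = of_int (- s\<^sup>2 - 1) + of_int (- s) * w"
  using monic_quadratic_roots[OF assms[unfolded F_factor_def]] by simp_all

locale complex_subfield =
  fixes K :: "complex set"
  assumes subfield: "subfield_C K"
begin

lemma zero_mem: "0 \<in> K"
  and one_mem: "1 \<in> K"
  and add_mem: "x \<in> K \<Longrightarrow> y \<in> K \<Longrightarrow> x + y \<in> K"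
  and mult_mem: "x \<in> K \<Longrightarrow> y \<in> K \<Longrightarrow> x * y \<in> K"
  and uminus_mem: "x \<in> K \<Longrightarrow> - x \<in> K"
  and inverse_mem: "x \<in> K \<Longrightarrow> inverse x \<in> K"
  using subfield unfolding subfield_C_def by auto

lemma diff_mem: "x \<in> K \<Longrightarrow> y \<in> K \<Longrightarrow> x - y \<in> K"
  using add_mem [of x "- y"] uminus_mem [of y] by simp

lemma of_nat_mem: "of_nat n \<in> K"
  by (induction n) (auto simp: zero_mem one_mem add_mem)

lemma of_int_mem: "of_int n \<in> K"
  by (cases n rule: int_cases) (auto simp: of_nat_mem uminus_mem simp del: of_nat_Suc)

end

lemma complex_subfield_gen_field: "complex_subfield (gen_field S)"
  unfolding complex_subfield_def subfield_C_def gen_field_def by auto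

lemma subset_gen_field: "S \<subseteq> gen_field S"
  unfolding gen_field_def by auto

locale complex_subfield_aut = complex_subfield +
  fixes \<sigma> :: "complex \<Rightarrow> complex"
  assumes aut: "field_aut K \<sigma>"
begin

lemma map_add: "x \<in> K \<Longrightarrow> y \<in> K \<Longrightarrow> \<sigma> (x + y) = \<sigma> x + \<sigma> y"
  and map_mult: "x \<in> K \<Longrightarrow> y \<in> K \<Longrightarrow> \<sigma> (x * y) = \<sigma> x * \<sigma> y"
  and map_one: "\<sigma> 1 = 1"
  using aut unfolding field_aut_def by auto

lemma map_zero: "\<sigma> 0 = 0"
  using map_add [OF zero_mem zero_mem] by simp

lemma map_uminus:
  assumes "x \<in> K" shows "\<sigma> (- x) = - \<sigma> x"
proof -
  have "\<sigma> (- x) + \<sigma> x = 0"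
    using map_add [OF uminus_mem [OF assms] assms] by (simp add: map_zero)
  then show ?thesis by (simp add: eq_neg_iff_add_eq_0)
qed

lemma map_of_nat: "\<sigma> (of_nat n) = of_nat n"
  by (induction n) (auto simp: map_zero map_one map_add one_mem of_nat_mem)

lemma map_of_int: "\<sigma> (of_int n) = of_int n"
  by (cases n rule: int_cases)
    (auto simp: map_of_nat map_uminus of_nat_mem simp del: of_nat_Suc)

lemma map_F_factor_root:
  assumes "w \<in> K" "x \<in> K" "F_factor s w x = 0"
  shows "F_factor s (\<sigma> w) (\<sigma> x) = 0"
proof -
  have "\<sigma> (F_factor s w x) = F_factor s (\<sigma> w) (\<sigma> x)"
    using assms(1,2) unfolding F_factor_def power2_eq_square
    by (simp only: map_add map_mult map_of_int add_mem mult_mem of_int_mem)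
  with assms(3) show ?thesis by (simp add: map_zero)
qed

lemma map_square_root:
  assumes "w \<in> K" "w\<^sup>2 = of_int n"
  shows "\<sigma> w = w \<or> \<sigma> w = - w"
proof -
  have "(\<sigma> w)\<^sup>2 = \<sigma> (w\<^sup>2)"
    using map_mult [OF assms(1) assms(1)] by (simp add: power2_eq_square)
  also have "\<dots> = w\<^sup>2"
    unfolding assms(2) by (rule map_of_int)
  finally show ?thesis by (simp add: power2_eq_iff)
qed

end

lemma F_poly_root_F_factor_root:
  assumes "poly (F_poly s) z = 0"
  obtains w :: real where "w\<^sup>2 = of_int (s\<^sup>2 + 2)" "F_factor s (of_real w) z = 0"
proof -
  define d where "d = sqrt (real_of_int (s\<^sup>2 + 2))"
  have d2: "d\<^sup>2 = of_int (s\<^sup>2 + 2)"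
    unfolding d_def by (simp add: add_nonneg_nonneg)
  then have "(complex_of_real d)\<^sup>2 = of_int (s\<^sup>2 + 2)"
    by (metis of_real_of_int_eq of_real_power)
  from assms [unfolded poly_F_poly_eq_F_factor_mult [OF this]]
  have "F_factor s (of_real d) z = 0 \<or> F_factor s (of_real (- d)) z = 0" by simp
  with d2 that show ?thesis by (metis power2_minus)
qed

lemma F_factor_middle_coeff_nonzero: "(of_int (2 * (s\<^sup>2 - s + 1)) :: complex) \<noteq> 0"
proof -
  have "0 < (2 * s - 1)\<^sup>2 + 3" by (rule add_nonneg_pos) simp_all
  also have "\<dots> = 4 * (s\<^sup>2 - s + 1)" by algebra
  finally show ?thesis by (simp only: of_int_eq_0_iff)
qed

lemma F_factor_coeff_mem:
  assumes K: "complex_subfield K" and roots: "{z. poly (F_poly s) z = 0} \<subseteq> K"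
    and w2: "w\<^sup>2 = of_int (s\<^sup>2 + 2)" and x: "F_factor s w x = 0"
  shows "w \<in> K"
proof -
  interpret complex_subfield K by (fact K)
  define P Q where "P = (of_int (2 * (s^3 - s\<^sup>2 + 2 * s - 1)) :: complex)"
    and "Q = (of_int (2 * (s\<^sup>2 - s + 1)) :: complex)"
  define y where "y = - (P + Q * w) - x"
  have "F_factor s w y = F_factor s w x"
    unfolding F_factor_def y_def P_def Q_def by (rule monic_quadratic_reflect)
  with x have "poly (F_poly s) x = 0" "poly (F_poly s) y = 0"
    by (simp_all add: poly_F_poly_eq_F_factor_mult [OF w2])
  with roots have "x \<in> K" "y \<in> K" by auto
  have "Q \<noteq> 0"
    unfolding Q_def by (rule F_factor_middle_coeff_nonzero)
  then have "w = (- (x + y) - P) * inverse Q"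
    unfolding y_def by (simp add: field_simps)
  also have "\<dots> \<in> K"
    unfolding P_def Q_def
    by (intro diff_mem uminus_mem add_mem mult_mem inverse_mem of_int_mem \<open>x \<in> K\<close> \<open>y \<in> K\<close>)
  finally show ?thesis .
qed

lemma roots_pair_under_cyclic_aut:
  assumes roots: "{r1, r2, r3, r4} = {z. poly (F_poly s) z = 0}"
    and distinct: "distinct [r1, r2, r3, r4]"
    and aut: "field_aut (gen_field {r1, r2, r3, r4}) \<sigma>"
    and \<sigma>: "\<sigma> r1 = r2" "\<sigma> r2 = r3" "\<sigma> r3 = r4"
  obtains w :: real where "w\<^sup>2 = of_int (s\<^sup>2 + 2)"
    and "F_factor s (of_real w) r1 = 0" "F_factor s (of_real w) r3 = 0"
    and "F_factor s (of_real (- w)) r2 = 0" "F_factor s (of_real (- w)) r4 = 0"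
proof -
  define K where "K = gen_field {r1, r2, r3, r4}"
  interpret complex_subfield_aut K \<sigma>
    using complex_subfield_gen_field aut
    unfolding K_def complex_subfield_aut_def complex_subfield_aut_axioms_def by blast
  have rK: "{r1, r2, r3, r4} \<subseteq> K"
    unfolding K_def by (rule subset_gen_field)
  then have rK': "r1 \<in> K" "r2 \<in> K" "r3 \<in> K" "r4 \<in> K" by simp_all
  obtain w :: real where w2: "w\<^sup>2 = of_int (s\<^sup>2 + 2)" and r1: "F_factor s (of_real w) r1 = 0"
    using F_poly_root_F_factor_root [of s r1] roots by blast
  have w2': "(complex_of_real w)\<^sup>2 = of_int (s\<^sup>2 + 2)"
    using w2 by (metis of_real_of_int_eq of_real_power)
  have wK: "of_real w \<in> K"
    using F_factor_coeff_mem [OF complex_subfield_axioms _ w2' r1] rK unfolding roots .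
  note step = map_F_factor_root [of _ _ s]
  have "\<sigma> (of_real w) \<noteq> of_real w"
  proof
    assume fixed: "\<sigma> (of_real w) = of_real w"
    have r2: "F_factor s (of_real w) r2 = 0" using step [OF wK rK'(1) r1] unfolding fixed \<sigma> .
    have r3: "F_factor s (of_real w) r3 = 0" using step [OF wK rK'(2) r2] unfolding fixed \<sigma> .
    from r1 r2 r3 distinct show False
      unfolding F_factor_def by (auto dest: monic_quadratic_three_roots)
  qed
  then have neg: "\<sigma> (of_real w) = of_real (- w)"
    using map_square_root [OF wK w2'] by simp
  have r2: "F_factor s (of_real (- w)) r2 = 0"
    using step [OF wK rK'(1) r1] unfolding neg \<sigma> .
  have "\<sigma> (of_real (- w)) = of_real w"
    using map_uminus [OF wK] neg by simp
  then have r3: "F_factor s (of_real w) r3 = 0"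
    using step [OF _ rK'(2) r2] wK uminus_mem unfolding \<sigma> by simp
  have r4: "F_factor s (of_real (- w)) r4 = 0"
    using step [OF wK rK'(3) r3] unfolding neg \<sigma> .
  from w2 r1 r3 r2 r4 show ?thesis by (rule that)
qed

lemma norm_one_unit:
  fixes x w :: real
  assumes w: "w\<^sup>2 = x\<^sup>2 + 2"
  shows "(x\<^sup>2 + 1 + x * w) * (x\<^sup>2 + 1 - x * w) = 1"
    and "x\<^sup>2 + 1 + x * w > 0"
    and "ln (x\<^sup>2 + 1 - x * w) = - ln (x\<^sup>2 + 1 + x * w)"
    and "\<bar>ln (x\<^sup>2 + 1 + x * w)\<bar> = ln (x\<^sup>2 + 1 + \<bar>x\<bar> * sqrt (x\<^sup>2 + 2))"
proof -
  show norm: "(x\<^sup>2 + 1 + x * w) * (x\<^sup>2 + 1 - x * w) = 1"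
    using w by (simp add: algebra_simps power2_eq_square) algebra
  moreover have "(x\<^sup>2 + 1 + x * w) + (x\<^sup>2 + 1 - x * w) > 0"
    by (simp add: add_nonneg_pos)
  ultimately have pos: "x\<^sup>2 + 1 + x * w > 0" and pos': "x\<^sup>2 + 1 - x * w > 0"
    by (smt (verit) mult_nonpos_nonneg mult_nonneg_nonpos)+
  then show "x\<^sup>2 + 1 + x * w > 0" by simp
  have "ln (x\<^sup>2 + 1 + x * w) + ln (x\<^sup>2 + 1 - x * w) = 0"
    using ln_mult_pos [OF pos pos'] norm by simp
  then show conj: "ln (x\<^sup>2 + 1 - x * w) = - ln (x\<^sup>2 + 1 + x * w)" by simp
  have "\<bar>w\<bar> = sqrt (x\<^sup>2 + 2)"
    using w by (metis real_sqrt_abs)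
  then have eps: "\<bar>x\<bar> * sqrt (x\<^sup>2 + 2) = \<bar>x * w\<bar>"
    by (simp add: abs_mult)
  show "\<bar>ln (x\<^sup>2 + 1 + x * w)\<bar> = ln (x\<^sup>2 + 1 + \<bar>x\<bar> * sqrt (x\<^sup>2 + 2))"
  proof (cases "x * w \<ge> 0")
    case True
    then have "ln (x\<^sup>2 + 1 + x * w) \<ge> 0" by simp
    with True show ?thesis unfolding eps by simp
  next
    case False
    then have "ln (x\<^sup>2 + 1 + \<bar>x * w\<bar>) = - ln (x\<^sup>2 + 1 + x * w)"
      using conj by simp
    moreover have "ln (x\<^sup>2 + 1 - x * w) \<ge> 0"
      using False zero_le_power2 [of x] by (intro ln_ge_zero) linarith
    ultimately show ?thesis unfolding eps conj by simp
  qed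
qed

lemma F_factor_roots_mult:
  assumes "F_factor s (of_real w) x = 0" "F_factor s (of_real w) y = 0" "x \<noteq> y"
  shows "x * y = - of_real (of_int s ^ 2 + 1 + of_int s * w)"
  using F_factor_roots_sum_prod (2) [OF assms] by simp

lemma F_factor_roots_ln_norm:
  assumes w: "w\<^sup>2 = of_int (s\<^sup>2 + 2)"
    and xy: "F_factor s (of_real w) x = 0" "F_factor s (of_real w) y = 0" "x \<noteq> y"
  shows "x \<noteq> 0" "y \<noteq> 0"
    and "ln (cmod x) + ln (cmod y) = ln (of_int s ^ 2 + 1 + of_int s * w)"
proof -
  have pos: "of_int s ^ 2 + 1 + of_int s * w > 0"
    using norm_one_unit (2) [of w "of_int s"] w by simp
  then have "cmod x * cmod y = of_int s ^ 2 + 1 + of_int s * w"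
    unfolding norm_mult [symmetric] F_factor_roots_mult [OF xy] norm_minus_cancel norm_of_real
    by simp
  moreover from this pos show "x \<noteq> 0" "y \<noteq> 0" by auto
  ultimately show "ln (cmod x) + ln (cmod y) = ln (of_int s ^ 2 + 1 + of_int s * w)"
    using ln_mult_pos [of "cmod x" "cmod y"] by simp
qed

lemma abs_ln_abs_le_ln_abs_add_inverse:
  fixes r :: real
  assumes "r \<noteq> 0"
  shows "\<bar>ln \<bar>r\<bar>\<bar> \<le> ln \<bar>r + 1 / r\<bar>"
proof -
  have "\<bar>r + 1 / r\<bar> = \<bar>r\<bar> + 1 / \<bar>r\<bar>"
  proof (cases "r > 0")
    case False
    with assms have "r < 0" "1 / r < 0" by simp_all
    then have "r + 1 / r < 0" by (rule add_neg_neg)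
    with \<open>r < 0\<close> show ?thesis by simp
  qed simp
  then have "\<bar>r\<bar> \<le> \<bar>r + 1 / r\<bar>" "1 / \<bar>r\<bar> \<le> \<bar>r + 1 / r\<bar>"
    using assms by simp_all
  then have "ln \<bar>r\<bar> \<le> ln \<bar>r + 1 / r\<bar>" "ln (1 / \<bar>r\<bar>) \<le> ln \<bar>r + 1 / r\<bar>"
    using assms by (simp_all add: ln_mono)
  then show ?thesis
    using assms by (simp add: ln_div abs_le_iff)
qed

lemma real_or_unimodular_of_add_inverse_real:
  fixes z :: complex
  assumes "z \<noteq> 0" and "Im (z + 1 / z) = 0"
  shows "Im z = 0 \<or> cmod z = 1"
proof -
  have "Im (z + 1 / z) = Im z * (1 - 1 / (cmod z)\<^sup>2)"
    by (simp add: Im_divide cmod_power2 algebra_simps)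
  with assms have "Im z = 0 \<or> (cmod z)\<^sup>2 = 1" by simp
  then show ?thesis using norm_ge_zero [of z] by (auto simp: power2_eq_1_iff)
qed

lemma abs_ln_norm_le_of_add_inverse:
  fixes z :: complex
  assumes "z \<noteq> 0" and c: "z + 1 / z = of_real c"
  shows "\<bar>ln (cmod z)\<bar> \<le> ln (max 1 \<bar>c\<bar>)"
proof -
  have "Im z = 0 \<or> cmod z = 1"
    using real_or_unimodular_of_add_inverse_real [OF assms(1)] c by simp
  then show ?thesis
  proof
    assume "Im z = 0"
    then have z: "z = of_real (Re z)" by (simp add: complex_eq_iff)
    define r where "r = Re z"
    have "r \<noteq> 0" "r + 1 / r = c"
      using assms z unfolding r_def
      by (metis of_real_0, metis of_real_add of_real_divide of_real_1 of_real_eq_iff)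
    have "c * r = r\<^sup>2 + 1"
      using \<open>r \<noteq> 0\<close> unfolding \<open>r + 1 / r = c\<close> [symmetric] by (simp add: field_simps power2_eq_square)
    then have "\<bar>c\<bar> > 0" using zero_le_power2 [of r] by (cases "c = 0") simp_all
    have "\<bar>ln (cmod z)\<bar> = \<bar>ln \<bar>r\<bar>\<bar>"
      using z unfolding r_def by (metis norm_of_real)
    also have "\<dots> \<le> ln \<bar>c\<bar>"
      using abs_ln_abs_le_ln_abs_add_inverse [OF \<open>r \<noteq> 0\<close>] unfolding \<open>r + 1 / r = c\<close> .
    also have "\<dots> \<le> ln (max 1 \<bar>c\<bar>)"
      using \<open>\<bar>c\<bar> > 0\<close> by simp
    finally show ?thesis .
  qed simp
qed

definition ratio_trace :: "real \<Rightarrow> real \<Rightarrow> real" where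
  "ratio_trace x w = - (4 * x ^ 4 - 8 * x ^ 3 + 16 * x\<^sup>2 - 16 * x + 12)
     + (- 4 * x ^ 3 + 8 * x\<^sup>2 - 12 * x + 8) * w"

lemma ratio_trace_conj:
  assumes "w\<^sup>2 = x\<^sup>2 + 2"
  shows "ratio_trace x w + ratio_trace x (- w) = - 2 * (4 * x ^ 4 - 8 * x ^ 3 + 16 * x\<^sup>2 - 16 * x + 12)"
    and "ratio_trace x w * ratio_trace x (- w) = 16 * (x\<^sup>2 + 1)\<^sup>2"
proof -
  show "ratio_trace x w + ratio_trace x (- w) = - 2 * (4 * x ^ 4 - 8 * x ^ 3 + 16 * x\<^sup>2 - 16 * x + 12)"
    unfolding ratio_trace_def by simp
  have "ratio_trace x w * ratio_trace x (- w)
      = (4 * x ^ 4 - 8 * x ^ 3 + 16 * x\<^sup>2 - 16 * x + 12)\<^sup>2 - (- 4 * x ^ 3 + 8 * x\<^sup>2 - 12 * x + 8)\<^sup>2 * w\<^sup>2"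
    unfolding ratio_trace_def by (simp add: algebra_simps power2_eq_square)
  also have "\<dots> = 16 * (x\<^sup>2 + 1)\<^sup>2"
    unfolding assms by algebra
  finally show "ratio_trace x w * ratio_trace x (- w) = 16 * (x\<^sup>2 + 1)\<^sup>2" .
qed

lemma ratio_trace_mult_unit:
  assumes "w\<^sup>2 = x\<^sup>2 + 2"
  shows "(2 * (x ^ 3 - x\<^sup>2 + 2 * x - 1) + 2 * (x\<^sup>2 - x + 1) * w)\<^sup>2
    = ratio_trace x w * - (x\<^sup>2 + 1 + x * w)"
  using assms unfolding ratio_trace_def by algebra

lemma F_factor_roots_ratio:
  assumes w: "w\<^sup>2 = of_int (s\<^sup>2 + 2)"
    and xy: "F_factor s (of_real w) x = 0" "F_factor s (of_real w) y = 0" "x \<noteq> y"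
  shows "x / y + y / x = of_real (ratio_trace (of_int s) w - 2)"
proof -
  have "x \<noteq> 0" "y \<noteq> 0" using F_factor_roots_ln_norm [OF assms] by simp_all
  then have "x / y + y / x = (x + y)\<^sup>2 / (x * y) - 2"
    by (simp add: field_simps power2_eq_square)
  also have "(x + y)\<^sup>2 = of_real (ratio_trace (of_int s) w) * (x * y)"
  proof -
    define A where "A = 2 * (of_int s ^ 3 - of_int s ^ 2 + 2 * of_int s - 1)
        + 2 * (of_int s ^ 2 - of_int s + 1) * w"
    have "x + y = - of_real A"
      using F_factor_roots_sum_prod (1) [OF xy] unfolding A_def by simp
    then have "(x + y)\<^sup>2 = of_real (A\<^sup>2)" by simp
    also have "A\<^sup>2 = ratio_trace (of_int s) w * - (of_int s ^ 2 + 1 + of_int s * w)"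
      unfolding A_def using w by (intro ratio_trace_mult_unit) simp
    finally show ?thesis
      unfolding F_factor_roots_mult [OF xy] by simp
  qed
  finally show ?thesis
    using \<open>x \<noteq> 0\<close> \<open>y \<noteq> 0\<close> by simp
qed

lemma F_factor_roots_ln_norm_divide_sq:
  assumes w: "w\<^sup>2 = of_int (s\<^sup>2 + 2)"
    and xy: "F_factor s (of_real w) x = 0" "F_factor s (of_real w) y = 0" "x \<noteq> y"
  shows "(ln (cmod (x / y)))\<^sup>2 \<le> (ln (max 1 \<bar>ratio_trace (of_int s) w - 2\<bar>))\<^sup>2"
proof (subst power2_le_iff_abs_le)
  show "\<bar>ln (cmod (x / y))\<bar> \<le> ln (max 1 \<bar>ratio_trace (of_int s) w - 2\<bar>)"
  proof (rule abs_ln_norm_le_of_add_inverse)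
    show "x / y \<noteq> 0" using F_factor_roots_ln_norm [OF assms] by simp
    show "x / y + 1 / (x / y) = of_real (ratio_trace (of_int s) w - 2)"
      using F_factor_roots_ratio [OF assms] by simp
  qed
qed simp

lemma ln_sq_sum_bound_ordered:
  fixes X Y u n :: real
  assumes le: "X \<le> Y" and sum: "X + Y = - 2 * u" and prod: "0 < X * Y" "X * Y \<le> 7 * u"
    and u: "2 * u + 2 \<le> 9 * n ^ 4" and n: "n \<ge> 10 ^ 5"
  shows "(ln (max 1 \<bar>X - 2\<bar>))\<^sup>2 + (ln (max 1 \<bar>Y - 2\<bar>))\<^sup>2 < 18 * (ln n)\<^sup>2"
proof -
  have "u > 0" using prod by linarith
  with le sum have X: "X \<le> - u" by linarith
  with \<open>u > 0\<close> prod have Y: "Y < 0" by (smt (verit) mult_nonpos_nonneg)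
  have "- Y * u \<le> - Y * - X" using X Y by (intro mult_left_mono) simp_all
  with prod have "(- Y) * u \<le> 7 * u" by (simp add: mult.commute)
  then have "- Y \<le> 7" by (simp only: mult_le_cancel_right_pos [OF \<open>u > 0\<close>])
  then have "2 - Y \<le> 9" by simp
  have "2 - X \<le> 9 * n ^ 4" using sum Y u by linarith
  define L where "L = ln n"
  have "5 * ln (9 :: real) = ln (9 ^ 5)" by (simp only: ln_realpow)
  also have "\<dots> \<le> L" unfolding L_def using n by simp
  finally have ln9: "5 * ln (9 :: real) \<le> L" .
  have "ln (2 - X) \<le> ln (9 * n ^ 4)" using \<open>2 - X \<le> _\<close> X \<open>u > 0\<close> by (intro ln_mono) auto
  also have "\<dots> = ln 9 + 4 * L" using n by (simp add: ln_mult ln_realpow L_def)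
  finally have lnX: "ln (2 - X) \<le> 21 / 5 * L" using ln9 by linarith
  have "ln (2 - Y) \<le> ln 9" using \<open>2 - Y \<le> 9\<close> Y by (intro ln_mono) auto
  with ln9 have lnY: "ln (2 - Y) \<le> 1 / 5 * L" by linarith
  have mx: "max 1 \<bar>X - 2\<bar> = 2 - X" "max 1 \<bar>Y - 2\<bar> = 2 - Y"
    using X Y \<open>u > 0\<close> by auto
  have "(ln (2 - X))\<^sup>2 \<le> (21 / 5 * L)\<^sup>2" "(ln (2 - Y))\<^sup>2 \<le> (1 / 5 * L)\<^sup>2"
    using lnX lnY X Y \<open>u > 0\<close> by (intro power_mono; simp)+
  moreover have "(21 / 5 * L)\<^sup>2 + (1 / 5 * L)\<^sup>2 < 18 * L\<^sup>2"
    using n by (simp add: L_def power2_eq_square)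
  ultimately show ?thesis unfolding mx L_def by linarith
qed

lemma ln_sq_sum_bound:
  fixes X Y u n :: real
  assumes sum: "X + Y = - 2 * u" and prod: "0 < X * Y" "X * Y \<le> 7 * u"
    and u: "2 * u + 2 \<le> 9 * n ^ 4" and n: "n \<ge> 10 ^ 5"
  shows "(ln (max 1 \<bar>X - 2\<bar>))\<^sup>2 + (ln (max 1 \<bar>Y - 2\<bar>))\<^sup>2 < 18 * (ln n)\<^sup>2"
proof (cases "X \<le> Y")
  case True
  from ln_sq_sum_bound_ordered [OF this assms] show ?thesis .
next
  case False
  from ln_sq_sum_bound_ordered [of Y X, OF _ _ _ _ u n] False sum prod show ?thesis
    by (simp add: ac_simps)
qed

lemma quartic_bounds:
  fixes x :: real
  assumes "\<bar>x\<bar> \<ge> 10 ^ 5"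
  shows "16 * (x\<^sup>2 + 1)\<^sup>2 \<le> 7 * (4 * x ^ 4 - 8 * x ^ 3 + 16 * x\<^sup>2 - 16 * x + 12)"
    and "2 * (4 * x ^ 4 - 8 * x ^ 3 + 16 * x\<^sup>2 - 16 * x + 12) + 2 \<le> 9 * x ^ 4"
proof -
  define n where "n = \<bar>x\<bar>"
  have n: "n \<ge> 100000" using assms n_def by simp
  have even: "x\<^sup>2 = n\<^sup>2" "x ^ 4 = n ^ 4" "(x\<^sup>2 + 1)\<^sup>2 = n ^ 4 + 2 * n\<^sup>2 + 1"
    unfolding n_def by (simp_all add: power_even_abs_numeral power2_sum flip: power_mult)
  have odd: "x ^ 3 \<le> n ^ 3" "- (x ^ 3) \<le> n ^ 3" "x \<le> n" "- x \<le> n"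
    unfolding n_def by (simp_all add: abs_le_iff flip: power_abs)
  have "n\<^sup>2 \<ge> 100000 * n" "n ^ 3 \<ge> 100000 * n\<^sup>2" "n ^ 4 \<ge> 100000 * n ^ 3"
    using mult_right_mono [OF n, of "n ^ k" for k] n
    by (simp_all add: power2_eq_square power3_eq_cube power4_eq_xxxx mult.commute)
  with n have A: "12 * n ^ 4 - 56 * n ^ 3 + 80 * n\<^sup>2 - 112 * n + 68 \<ge> 0"
    and B: "n ^ 4 - 16 * n ^ 3 - 32 * n\<^sup>2 - 32 * n - 26 \<ge> 0" by linarith+
  show "16 * (x\<^sup>2 + 1)\<^sup>2 \<le> 7 * (4 * x ^ 4 - 8 * x ^ 3 + 16 * x\<^sup>2 - 16 * x + 12)"
    unfolding even(3) unfolding even(1,2) using A odd(1,3) by (simp add: algebra_simps)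
  show "2 * (4 * x ^ 4 - 8 * x ^ 3 + 16 * x\<^sup>2 - 16 * x + 12) + 2 \<le> 9 * x ^ 4"
    unfolding even(1,2) using B odd(2,4) by (simp add: algebra_simps)
qed

lemma ratio_trace_ln_bound:
  assumes x: "\<bar>x\<bar> \<ge> 10 ^ 5" and w: "w\<^sup>2 = x\<^sup>2 + 2"
  shows "(ln (max 1 \<bar>ratio_trace x w - 2\<bar>))\<^sup>2 + (ln (max 1 \<bar>ratio_trace x (- w) - 2\<bar>))\<^sup>2
    < 18 * (ln \<bar>x\<bar>)\<^sup>2"
proof -
  define u where "u = 4 * x ^ 4 - 8 * x ^ 3 + 16 * x\<^sup>2 - 16 * x + 12"
  have sum: "ratio_trace x w + ratio_trace x (- w) = - 2 * u"
    and prod: "ratio_trace x w * ratio_trace x (- w) = 16 * (x\<^sup>2 + 1)\<^sup>2"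
    using ratio_trace_conj [OF w] unfolding u_def by simp_all
  have "0 < x\<^sup>2 + 1" using zero_le_power2 [of x] by linarith
  then have "0 < 16 * (x\<^sup>2 + 1)\<^sup>2" by simp
  moreover have "16 * (x\<^sup>2 + 1)\<^sup>2 \<le> 7 * u" "2 * u + 2 \<le> 9 * \<bar>x\<bar> ^ 4"
    using quartic_bounds [OF x] unfolding u_def by (simp_all add: power_even_abs_numeral)
  ultimately show ?thesis
    using ln_sq_sum_bound [OF sum _ _ _ x] prod by simp
qed

lemma abs_det_log_circulant:
  fixes a1 a2 a3 a4 L :: real
  assumes "a1 + a3 = L" and "a2 + a4 = - L"
  shows "\<bar>det (vector [vector [a1, a2, a3], vector [a2, a3, a4], vector [a3, a4, a1]] :: real^3^3)\<bar>
    = 1 / 4 * ((a1 - a3)\<^sup>2 + (a2 - a4)\<^sup>2) * (2 * \<bar>L\<bar>)"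
proof -
  have a4: "a4 = - (a1 + a2 + a3)" using assms by linarith
  have "det (vector [vector [a1, a2, a3], vector [a2, a3, a4], vector [a3, a4, a1]] :: real^3^3)
      = - (1 / 4) * (a1 - a2 + a3 - a4) * ((a1 - a3)\<^sup>2 + (a2 - a4)\<^sup>2)"
    unfolding det_3 a4 by simp algebra
  moreover have "a1 - a2 + a3 - a4 = 2 * L" using assms by linarith
  ultimately show ?thesis by (simp add: abs_mult)
qed

lemma F_factor_pairs_abs_det_ln_norm:
  assumes w: "w\<^sup>2 = of_int (s\<^sup>2 + 2)"
    and r13: "F_factor s (of_real w) r1 = 0" "F_factor s (of_real w) r3 = 0" "r1 \<noteq> r3"
    and r24: "F_factor s (of_real (- w)) r2 = 0" "F_factor s (of_real (- w)) r4 = 0" "r2 \<noteq> r4"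
  shows "\<bar>det (vector [vector [ln (cmod r1), ln (cmod r2), ln (cmod r3)],
      vector [ln (cmod r2), ln (cmod r3), ln (cmod r4)],
      vector [ln (cmod r3), ln (cmod r4), ln (cmod r1)]] :: real^3^3)\<bar>
    = 1 / 4 * ((ln (cmod (r1 / r3)))\<^sup>2 + (ln (cmod (r2 / r4)))\<^sup>2)
        * (2 * \<bar>ln (of_int s ^ 2 + 1 + of_int s * w)\<bar>)"
proof -
  have w': "(- w)\<^sup>2 = of_int (s\<^sup>2 + 2)" using w by simp
  note ln13 = F_factor_roots_ln_norm [OF w r13]
  note ln24 = F_factor_roots_ln_norm [OF w' r24]
  have "ln (cmod r2) + ln (cmod r4) = - ln (of_int s ^ 2 + 1 + of_int s * w)"
    using ln24(3) norm_one_unit (3) [of w "of_int s"] w by simp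
  moreover have "ln (cmod (r1 / r3)) = ln (cmod r1) - ln (cmod r3)"
      "ln (cmod (r2 / r4)) = ln (cmod r2) - ln (cmod r4)"
    using ln13(1,2) ln24(1,2) by (simp_all add: norm_divide ln_div)
  ultimately show ?thesis
    using abs_det_log_circulant [OF ln13(3)] by simp
qed

lemma F_factor_pairs_ln_norm_ratio_bound:
  assumes s: "\<bar>s\<bar> \<ge> 10 ^ 5" and w: "w\<^sup>2 = of_int (s\<^sup>2 + 2)"
    and r13: "F_factor s (of_real w) r1 = 0" "F_factor s (of_real w) r3 = 0" "r1 \<noteq> r3"
    and r24: "F_factor s (of_real (- w)) r2 = 0" "F_factor s (of_real (- w)) r4 = 0" "r2 \<noteq> r4"
  shows "(ln (cmod (r1 / r3)))\<^sup>2 + (ln (cmod (r2 / r4)))\<^sup>2 < 18 * (ln \<bar>of_int s\<bar>)\<^sup>2"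
proof -
  have w': "(- w)\<^sup>2 = of_int (s\<^sup>2 + 2)" using w by simp
  have "real_of_int (10 ^ 5) \<le> real_of_int \<bar>s\<bar>"
    using s by (simp only: of_int_le_iff)
  then have "\<bar>real_of_int s\<bar> \<ge> 10 ^ 5" by simp
  from ratio_trace_ln_bound [OF this, of w] w
    F_factor_roots_ln_norm_divide_sq [OF w r13] F_factor_roots_ln_norm_divide_sq [OF w' r24]
  show ?thesis by simp
qed

theorem mainTheorem10:
  fixes s :: int and r1 r2 r3 r4 :: complex and \<sigma> :: "complex \<Rightarrow> complex"
  assumes "\<bar>s\<bar> \<ge> 10^5"
    and "\<exists>m::int. 3 * s ^ 2 - 4 * s + 4 = m ^ 2"
    and "squarefree (s^2 + 2)"
    and "{r1, r2, r3, r4} = {z. poly (F_poly s) z = 0}"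
    and "distinct [r1, r2, r3, r4]"
    and "generates_aut (gen_field {r1, r2, r3, r4}) \<sigma>"
    and "\<sigma> r1 = r2" and "\<sigma> r2 = r3" and "\<sigma> r3 = r4" and "\<sigma> r4 = r1"
    and "\<forall>z\<in>{r2, r3, r4}. cmod z < cmod r1"
  shows "let a1 = ln (cmod r1); a2 = ln (cmod r2); a3 = ln (cmod r3); a4 = ln (cmod r4);
             R' = \<bar>det (vector [vector [a1, a2, a3], vector [a2, a3, a4],
                                  vector [a3, a4, a1]] :: real^3^3)\<bar>;
             \<epsilon> = real_of_int (s^2 + 1) + real_of_int \<bar>s\<bar> * sqrt (real_of_int (s^2 + 2))
         in R' = 1/4 * ((ln (cmod (r1 / r3)))^2 + (ln (cmod (r2 / r4)))^2) * (2 * ln \<epsilon>)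
            \<and> R' / ln \<epsilon> < 9 * (ln \<bar>real_of_int s\<bar>)^2"
proof -
  have "field_aut (gen_field {r1, r2, r3, r4}) \<sigma>"
    using assms(6) unfolding generates_aut_def by blast
  then obtain w :: real where w: "w\<^sup>2 = of_int (s\<^sup>2 + 2)"
    and r13: "F_factor s (of_real w) r1 = 0" "F_factor s (of_real w) r3 = 0"
    and r24: "F_factor s (of_real (- w)) r2 = 0" "F_factor s (of_real (- w)) r4 = 0"
    using roots_pair_under_cyclic_aut [OF assms(4,5) _ assms(7-9)] by metis
  moreover have "r1 \<noteq> r3" "r2 \<noteq> r4" using assms(5) by auto
  ultimately have R: "\<bar>det (vector [vector [ln (cmod r1), ln (cmod r2), ln (cmod r3)],
        vector [ln (cmod r2), ln (cmod r3), ln (cmod r4)],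
        vector [ln (cmod r3), ln (cmod r4), ln (cmod r1)]] :: real^3^3)\<bar>
      = 1 / 4 * ((ln (cmod (r1 / r3)))\<^sup>2 + (ln (cmod (r2 / r4)))\<^sup>2)
          * (2 * \<bar>ln (of_int s ^ 2 + 1 + of_int s * w)\<bar>)"
    and bound: "(ln (cmod (r1 / r3)))\<^sup>2 + (ln (cmod (r2 / r4)))\<^sup>2 < 18 * (ln \<bar>of_int s\<bar>)\<^sup>2"
    using F_factor_pairs_abs_det_ln_norm F_factor_pairs_ln_norm_ratio_bound assms(1) by blast+
  define \<epsilon> where "\<epsilon> = real_of_int (s\<^sup>2 + 1) + real_of_int \<bar>s\<bar> * sqrt (real_of_int (s\<^sup>2 + 2))"
  have "\<bar>ln (of_int s ^ 2 + 1 + of_int s * w)\<bar> = ln \<epsilon>"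
    using norm_one_unit (4) [of w "of_int s"] w unfolding \<epsilon>_def by simp
  moreover have "ln \<epsilon> > 0"
    using assms(1) unfolding \<epsilon>_def by (simp add: add_pos_nonneg)
  ultimately show ?thesis
    using bound unfolding Let_def \<epsilon>_def [symmetric] R by simp
qed

end
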